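(* Let $p$ be an odd prime and let $k$ be an integer with $2\le k\le p-1$. Let $T$ be an orthogonal trade in $B_p$ of index $(1,k)$, let $s$ be a symbol occurring in $T$, and let $R\subseteq\mathbb{Z}_p$ be the set of rows $r$ such that $T$ contains a triple $(r,c,s)$ for some $c$. Then there exist a permutation $\phi$ of $R$ with no fixed points such that $U=\{(r,c,r+c): r\in R,\ c\in\mathbb{Z}_p\}$ is an orthogonal trade in $B_p$ of index $(1,k)$ with disjoint mate $U'=\{(r,c,\phi(r)+c): r\in R,\ c\in\mathbb{Z}_p\}$ (i.e. obtained by permuting the rows of $B_p$ indexed by $R$); in particular this trade has size $p|R|$.
   Context: All arithmetic is modulo $p$. A Latin square of order $p$ is viewed as a set of (row, column, symbol) triples in $\mathbb{Z}_p^3$. For $1\le k\le p-1$, $B_p(k)$ is the Latin square with symbol $ki+j$ in cell $(i,j)$, $i,j\in\mathbb{Z}_p$; $B_p=B_p(1)$. A Latin trade in a Latin square $L$ is a subset $T\subseteq L$ for which there is a partial Latin square $T'$ (a disjoint mate) such that $T$ and $T'$ occupy the same set of cells, $T\cap T'=\emptyset$, and each row (respectively column) of $T$ contains the same set of symbols as the corresponding row (column) of $T'$. Two Latin squares of order $p$ are orthogonal if superimposing them yields each of the $p^2$ ordered pairs exactly once. An orthogonal trade of index $(\ell,k)$ is a Latin trade $T\subseteq B_p(\ell)$ having a disjoint mate $T'$ such that $(B_p(\ell)\setminus T)\cup T'$ is orthogonal to $B_p(k)$. *)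

theory Defs
  imports Main "HOL-Computational_Algebra.Primes" "HOL-Combinatorics.Permutations"
begin

(* Z_p is represented by {0..<p} :: nat set, arithmetic taken mod p.
   A (partial) Latin square is a set of (row, column, symbol) triples. *)

type_synonym triple = "nat \<times> nat \<times> nat"

definition Bk :: "nat \<Rightarrow> nat \<Rightarrow> triple set" where
  "Bk p k = {(i, j, (k * i + j) mod p) | i j. i < p \<and> j < p}"

definition cells :: "triple set \<Rightarrow> (nat \<times> nat) set" where
  "cells T = {(r, c). \<exists>s. (r, c, s) \<in> T}"

definition row_syms :: "triple set \<Rightarrow> nat \<Rightarrow> nat set" where
  "row_syms T r = {s. \<exists>c. (r, c, s) \<in> T}"

definition col_syms :: "triple set \<Rightarrow> nat \<Rightarrow> nat set" where
  "col_syms T c = {s. \<exists>r. (r, c, s) \<in> T}"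

definition partial_latin :: "nat \<Rightarrow> triple set \<Rightarrow> bool" where
  "partial_latin p P \<longleftrightarrow>
     (\<forall>(r, c, s) \<in> P. r < p \<and> c < p \<and> s < p) \<and>
     (\<forall>r c s s'. (r, c, s) \<in> P \<longrightarrow> (r, c, s') \<in> P \<longrightarrow> s = s') \<and>
     (\<forall>r c c' s. (r, c, s) \<in> P \<longrightarrow> (r, c', s) \<in> P \<longrightarrow> c = c') \<and>
     (\<forall>r r' c s. (r, c, s) \<in> P \<longrightarrow> (r', c, s) \<in> P \<longrightarrow> r = r')"

definition disjoint_mate :: "nat \<Rightarrow> triple set \<Rightarrow> triple set \<Rightarrow> bool" where
  "disjoint_mate p T T' \<longleftrightarrow>
     partial_latin p T' \<and> cells T = cells T' \<and> T \<inter> T' = {} \<and>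
     (\<forall>r. row_syms T r = row_syms T' r) \<and> (\<forall>c. col_syms T c = col_syms T' c)"

definition latin_trade :: "nat \<Rightarrow> triple set \<Rightarrow> triple set \<Rightarrow> bool" where
  "latin_trade p L T \<longleftrightarrow> T \<subseteq> L \<and> (\<exists>T'. disjoint_mate p T T')"

definition orthogonal :: "nat \<Rightarrow> triple set \<Rightarrow> triple set \<Rightarrow> bool" where
  "orthogonal p L1 L2 \<longleftrightarrow>
     (\<forall>a < p. \<forall>b < p. card {(i, j). i < p \<and> j < p \<and> (i, j, a) \<in> L1 \<and> (i, j, b) \<in> L2} = 1)"

definition orth_trade_mate :: "nat \<Rightarrow> nat \<Rightarrow> nat \<Rightarrow> triple set \<Rightarrow> triple set \<Rightarrow> bool" where
  "orth_trade_mate p l k T T' \<longleftrightarrow>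
     T \<subseteq> Bk p l \<and> disjoint_mate p T T' \<and> orthogonal p ((Bk p l - T) \<union> T') (Bk p k)"

definition orthogonal_trade :: "nat \<Rightarrow> nat \<Rightarrow> nat \<Rightarrow> triple set \<Rightarrow> bool" where
  "orthogonal_trade p l k T \<longleftrightarrow> (\<exists>T'. orth_trade_mate p l k T T')"

end

theory Submission
  imports Defs "HOL-Number_Theory.Cong"
begin

text \<open>Let \<open>T'\<close> be a mate of \<open>T\<close>. For \<open>r \<in> R\<close> the symbol \<open>s\<close> lies in row \<open>r\<close> of \<open>T'\<close>
  in some column \<open>c\<close>, and since \<open>T\<close> and \<open>T'\<close> have the same column symbols, \<open>s\<close> lies in
  column \<open>c\<close> of \<open>T\<close> in a row \<open>\<phi> r \<in> R\<close>. Because \<open>T'\<close> is Latin in columns, \<open>B\<^sub>p\<close> Latin in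
  rows and \<open>T \<inter> T' = {}\<close>, \<open>\<phi>\<close> is a fixed-point-free permutation of \<open>R\<close>.
  Replacing the rows \<open>r \<in> R\<close> of \<open>B\<^sub>p\<close> by the rows \<open>\<phi> r\<close> is then a trade, and it is
  orthogonal: if \<open>\<gamma> i\<close> is the column of \<open>s\<close> in row \<open>i\<close> of the traded square \<open>L\<close>, then
  \<open>\<phi> i + \<gamma> i \<equiv> s\<close>, and orthogonality of \<open>L\<close> to \<open>B\<^sub>p(k)\<close> at the symbol \<open>s\<close> says that
  \<open>i \<mapsto> k i + \<gamma> i\<close> is a bijection of \<open>\<int>\<^sub>p\<close>. This bijection is exactly what orthogonality
  of the row-permuted square \<open>(\<phi> i + j)\<close> to \<open>B\<^sub>p(k)\<close> requires.\<close>

lemma ex_cong_add_nat: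
  fixes c a p :: nat
  assumes "0 < p"
  shows "\<exists>j<p. [c + j = a] (mod p)"
proof
  have "c \<le> p * c" and "(p - 1) * c = p * c - c"
    using assms by (simp_all add: diff_mult_distrib)
  then have sum: "c + (a + (p - 1) * c) = a + p * c"
    by linarith
  show "(a + (p - 1) * c) mod p < p \<and> [c + (a + (p - 1) * c) mod p = a] (mod p)"
    using assms unfolding cong_def mod_add_right_eq sum by simp
qed

lemma eq_mod_iff_cong: "a < p \<Longrightarrow> a = x mod p \<longleftrightarrow> [x = a] (mod p)"
  for a x p :: nat
  by (auto simp: cong_def)

definition row_block :: "nat \<Rightarrow> (nat \<Rightarrow> nat) \<Rightarrow> nat set \<Rightarrow> triple set" where
  "row_block p \<psi> R = {(r, c, (\<psi> r + c) mod p) | r c. r \<in> R \<and> c < p}"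

lemma row_block_iff [simp]:
  "(r, c, x) \<in> row_block p \<psi> R \<longleftrightarrow> r \<in> R \<and> c < p \<and> x = (\<psi> r + c) mod p"
  by (auto simp: row_block_def)

lemma Bk_iff [simp]: "(i, j, x) \<in> Bk p k \<longleftrightarrow> i < p \<and> j < p \<and> x = (k * i + j) mod p"
  by (auto simp: Bk_def)

lemma Bk_one_eq_row_block: "Bk p 1 = row_block p id {..<p}"
  by auto

lemma row_block_partial_latin:
  assumes "R \<subseteq> {..<p}" and "\<psi> ` R \<subseteq> {..<p}" and "inj_on \<psi> R"
  shows "partial_latin p (row_block p \<psi> R)"
  unfolding partial_latin_def
proof (intro conjI allI impI)
  show "\<forall>(r, c, x) \<in> row_block p \<psi> R. r < p \<and> c < p \<and> x < p"
    using assms(1) by auto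
  show "c = c'" if "(r, c, x) \<in> row_block p \<psi> R" "(r, c', x) \<in> row_block p \<psi> R" for r c c' x
    using that by (auto simp: cong_def[symmetric] cong_add_lcancel_nat intro: cong_less_modulus_unique_nat)
  show "r = r'" if "(r, c, x) \<in> row_block p \<psi> R" "(r', c, x) \<in> row_block p \<psi> R" for r r' c x
  proof -
    have "[\<psi> r = \<psi> r'] (mod p)"
      using that by (simp add: cong_def[symmetric] cong_add_rcancel_nat)
    then have "\<psi> r = \<psi> r'"
      using that assms(2) by (auto intro: cong_less_modulus_unique_nat)
    then show ?thesis
      using that assms(3) by (auto dest: inj_onD)
  qed
qed auto

lemma row_syms_row_block:
  assumes "r \<in> R" and "0 < p"
  shows "row_syms (row_block p \<psi> R) r = {..<p}"
proof (intro equalityI subsetI)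
  fix y assume "y \<in> {..<p}"
  then obtain c where "c < p" and "[\<psi> r + c = y] (mod p)"
    using ex_cong_add_nat[OF assms(2)] by blast
  then show "y \<in> row_syms (row_block p \<psi> R) r"
    using assms(1) \<open>y \<in> {..<p}\<close> by (auto simp: row_syms_def cong_def)
qed (auto simp: row_syms_def)

lemma row_syms_row_block_outside: "r \<notin> R \<Longrightarrow> row_syms (row_block p \<psi> R) r = {}"
  by (simp add: row_syms_def)

lemma col_syms_row_block:
  "col_syms (row_block p \<psi> R) c = (if c < p then (\<lambda>r. (r + c) mod p) ` \<psi> ` R else {})"
  by (auto simp: col_syms_def)

lemma cells_row_block: "cells (row_block p \<psi> R) = R \<times> {..<p}"
  by (auto simp: cells_def)

lemma card_row_block:
  assumes "finite R"
  shows "card (row_block p \<psi> R) = p * card R"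
proof -
  have "row_block p \<psi> R = (\<lambda>(r, c). (r, c, (\<psi> r + c) mod p)) ` (R \<times> {..<p})"
    by (auto simp: row_block_def)
  moreover have "inj_on (\<lambda>(r, c). (r, c, (\<psi> r + c) mod p)) (R \<times> {..<p})"
    by (auto intro: inj_onI)
  ultimately show ?thesis
    using assms by (simp add: card_image card_cartesian_product)
qed

lemma row_permutation_disjoint_mate:
  assumes "R \<subseteq> {..<p}" and "\<phi> permutes R" and "\<forall>r\<in>R. \<phi> r \<noteq> r"
  shows "disjoint_mate p (row_block p id R) (row_block p \<phi> R)"
  unfolding disjoint_mate_def
proof (intro conjI allI)
  have "\<phi> ` R = R"
    using assms(2) by (rule permutes_image)
  then show "partial_latin p (row_block p \<phi> R)"
    using assms(1,2) by (simp add: row_block_partial_latin permutes_inj_on)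
  show "row_block p id R \<inter> row_block p \<phi> R = {}"
  proof (rule ccontr)
    assume "row_block p id R \<inter> row_block p \<phi> R \<noteq> {}"
    then obtain r c where "r \<in> R" and "[r + c = \<phi> r + c] (mod p)"
      by (auto simp: cong_def)
    moreover have "r < p" and "\<phi> r < p"
      using \<open>r \<in> R\<close> assms(1,2) by (auto dest: permutes_in_image[THEN iffD2])
    ultimately have "r = \<phi> r"
      by (simp add: cong_add_rcancel_nat cong_less_modulus_unique_nat)
    with \<open>r \<in> R\<close> assms(3) show False
      by auto
  qed
  show "row_syms (row_block p id R) r = row_syms (row_block p \<phi> R) r" for r
  proof (cases "r \<in> R")
    case True
    then have "0 < p"
      using assms(1) by auto
    with True show ?thesis
      by (simp add: row_syms_row_block)
  qed (simp add: row_syms_row_block_outside)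
  show "col_syms (row_block p id R) c = col_syms (row_block p \<phi> R) c" for c
    using \<open>\<phi> ` R = R\<close> by (simp add: col_syms_row_block)
qed (simp add: cells_row_block)

lemma Bk_one_swap_row_block:
  assumes "R \<subseteq> {..<p}" and "\<phi> permutes R"
  shows "(Bk p 1 - row_block p id R) \<union> row_block p \<phi> R = row_block p \<phi> {..<p}"
  using assms by (auto simp: permutes_not_in)

lemma orthogonal_cell_unique:
  assumes "orthogonal p L M" and "a < p" and "b < p"
    and "i < p" "j < p" "(i, j, a) \<in> L" "(i, j, b) \<in> M"
    and "i' < p" "j' < p" "(i', j', a) \<in> L" "(i', j', b) \<in> M"
  shows "i = i' \<and> j = j'"
proof -
  let ?S = "{(i, j). i < p \<and> j < p \<and> (i, j, a) \<in> L \<and> (i, j, b) \<in> M}"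
  have "card ?S = 1"
    using assms(1-3) unfolding orthogonal_def by blast
  then obtain x where "?S = {x}"
    by (rule card_1_singletonE)
  moreover have "(i, j) \<in> ?S" and "(i', j') \<in> ?S"
    using assms(4-11) by auto
  ultimately show ?thesis
    by auto
qed

lemma orthogonal_row_block:
  fixes \<psi> \<gamma> :: "nat \<Rightarrow> nat"
  assumes "0 < p"
    and sum: "\<And>i. i < p \<Longrightarrow> [\<psi> i + \<gamma> i = s] (mod p)"
    and inj: "inj_on (\<lambda>i. (k * i + \<gamma> i) mod p) {..<p}"
  shows "orthogonal p (row_block p \<psi> {..<p}) (Bk p k)"
  unfolding orthogonal_def
proof (intro allI impI)
  fix a b assume "a < p" "b < p"
  define h where "h = (\<lambda>i. (k * i + \<gamma> i) mod p)"
  have "h ` {..<p} \<subseteq> {..<p}"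
    using \<open>0 < p\<close> by (auto simp: h_def)
  then have h_onto: "h ` {..<p} = {..<p}"
    using inj by (simp add: endo_inj_surj h_def)
  \<comment> \<open>the pair \<open>(a, b)\<close> occurs in row \<open>i\<close> iff \<open>h i + a \<equiv> b + s\<close>, and \<open>h\<close> is a bijection\<close>
  have row_condition: "[k * i + j = b] (mod p) \<longleftrightarrow> [h i + a = b + s] (mod p)"
    if "i < p" and "[\<psi> i + j = a] (mod p)" for i j
  proof -
    have "[h i + a = (k * i + \<gamma> i) + (\<psi> i + j)] (mod p)"
      using that(2) by (simp add: h_def cong_add cong_sym)
    also have "(k * i + \<gamma> i) + (\<psi> i + j) = (k * i + j) + (\<psi> i + \<gamma> i)"
      by simp
    also have "[\<dots> = (k * i + j) + s] (mod p)"
      using sum[OF that(1)] by (simp add: cong_add_lcancel_nat)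
    finally have "[h i + a = (k * i + j) + s] (mod p)" .
    then show ?thesis
      using cong_add_rcancel_nat[of "k * i + j" s b p] cong_sym cong_trans by metis
  qed
  obtain t where "t < p" and "[a + t = b + s] (mod p)"
    using ex_cong_add_nat[OF \<open>0 < p\<close>] by blast
  moreover obtain i0 where "i0 < p" and "h i0 = t"
    using \<open>t < p\<close> h_onto by (metis imageE lessThan_iff)
  ultimately have "[h i0 + a = b + s] (mod p)"
    by (simp add: add.commute)
  obtain j0 where "j0 < p" and "[\<psi> i0 + j0 = a] (mod p)"
    using ex_cong_add_nat[OF \<open>0 < p\<close>] by blast
  have "{(i, j). i < p \<and> j < p \<and> (i, j, a) \<in> row_block p \<psi> {..<p} \<and> (i, j, b) \<in> Bk p k}
      = {(i0, j0)}"
  proof (intro equalityI subsetI)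
    fix x assume "x \<in> {(i, j). i < p \<and> j < p \<and> (i, j, a) \<in> row_block p \<psi> {..<p} \<and> (i, j, b) \<in> Bk p k}"
    then obtain i j where x: "x = (i, j)" "i < p" "j < p"
      and row: "[\<psi> i + j = a] (mod p)" and col: "[k * i + j = b] (mod p)"
      using \<open>a < p\<close> \<open>b < p\<close> by (auto simp: eq_mod_iff_cong)
    have "[h i + a = h i0 + a] (mod p)"
      using row_condition[OF x(2) row] col \<open>[h i0 + a = b + s] (mod p)\<close> cong_sym cong_trans by metis
    then have "[h i = h i0] (mod p)"
      by (simp add: cong_add_rcancel_nat)
    then have "h i = h i0"
      unfolding cong_def h_def by simp
    then have "i = i0"
      using inj x(2) \<open>i0 < p\<close> by (auto simp: h_def dest: inj_onD)
    then have "[\<psi> i0 + j = \<psi> i0 + j0] (mod p)"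
      using row \<open>[\<psi> i0 + j0 = a] (mod p)\<close> cong_sym cong_trans by metis
    then have "j = j0"
      using x(3) \<open>j0 < p\<close> by (simp add: cong_add_lcancel_nat cong_less_modulus_unique_nat)
    with x \<open>i = i0\<close> show "x \<in> {(i0, j0)}"
      by simp
  next
    fix x assume "x \<in> {(i0, j0)}"
    moreover have "[k * i0 + j0 = b] (mod p)"
      using row_condition \<open>i0 < p\<close> \<open>[\<psi> i0 + j0 = a] (mod p)\<close> \<open>[h i0 + a = b + s] (mod p)\<close> by blast
    ultimately show "x \<in> {(i, j). i < p \<and> j < p \<and> (i, j, a) \<in> row_block p \<psi> {..<p} \<and> (i, j, b) \<in> Bk p k}"
      using \<open>i0 < p\<close> \<open>j0 < p\<close> \<open>a < p\<close> \<open>b < p\<close> \<open>[\<psi> i0 + j0 = a] (mod p)\<close>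
      by (auto simp: eq_mod_iff_cong)
  qed
  then show "card {(i, j). i < p \<and> j < p \<and> (i, j, a) \<in> row_block p \<psi> {..<p} \<and> (i, j, b) \<in> Bk p k} = 1"
    by simp
qed

context
  fixes p k :: nat and T T' :: "triple set"
  assumes mate: "orth_trade_mate p 1 k T T'"
begin

lemma trade_subset_Bk: "T \<subseteq> Bk p 1"
  and trade_disjoint_mate: "disjoint_mate p T T'"
  and trade_orthogonal: "orthogonal p ((Bk p 1 - T) \<union> T') (Bk p k)"
  using mate by (auto simp: orth_trade_mate_def)

context
  fixes s :: nat and R :: "nat set"
  assumes R_def: "R = {r. \<exists>c. (r, c, s) \<in> T}"
begin

lemma symbol_rows_subset: "R \<subseteq> {..<p}"
  using trade_subset_Bk by (auto simp: R_def)

lemma symbol_row_permutation: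
  "\<exists>\<phi>. \<phi> permutes R \<and> (\<forall>r\<in>R. \<phi> r \<noteq> r) \<and> (\<forall>r\<in>R. \<exists>c. (r, c, s) \<in> T' \<and> (\<phi> r, c, s) \<in> T)"
proof -
  have "partial_latin p (Bk p 1)"
    unfolding Bk_one_eq_row_block by (rule row_block_partial_latin) auto
  then have T_row_unique: "c = c'" if "(r, c, s) \<in> T" "(r, c', s) \<in> T" for r c c'
    using that trade_subset_Bk unfolding partial_latin_def by blast
  have T'_col_unique: "r = r'" if "(r, c, s) \<in> T'" "(r', c, s) \<in> T'" for r r' c
    using that trade_disjoint_mate unfolding disjoint_mate_def partial_latin_def by blast
  have partner: "\<exists>r'. \<exists>c. (r, c, s) \<in> T' \<and> (r', c, s) \<in> T" if "r \<in> R" for r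
  proof -
    have "s \<in> row_syms T r"
      using that by (auto simp: R_def row_syms_def)
    then have "s \<in> row_syms T' r"
      using trade_disjoint_mate by (simp add: disjoint_mate_def)
    then obtain c where "(r, c, s) \<in> T'"
      by (auto simp: row_syms_def)
    then have "s \<in> col_syms T c"
      using trade_disjoint_mate by (auto simp: disjoint_mate_def col_syms_def)
    then show ?thesis
      using \<open>(r, c, s) \<in> T'\<close> by (auto simp: col_syms_def)
  qed
  define \<phi> where "\<phi> r = (if r \<in> R then SOME r'. \<exists>c. (r, c, s) \<in> T' \<and> (r', c, s) \<in> T else r)"
    for r
  have \<phi>: "\<exists>c. (r, c, s) \<in> T' \<and> (\<phi> r, c, s) \<in> T" if "r \<in> R" for r
    using someI_ex[OF partner[OF that]] that by (simp add: \<phi>_def)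
  have \<phi>_outside: "\<phi> r = r" if "r \<notin> R" for r
    using that by (simp add: \<phi>_def)
  have "\<phi> ` R \<subseteq> R"
    using \<phi> by (auto simp: R_def)
  moreover have "inj_on \<phi> R"
  proof (rule inj_onI)
    fix r r' assume "r \<in> R" "r' \<in> R" "\<phi> r = \<phi> r'"
    then show "r = r'"
      using \<phi> T_row_unique T'_col_unique by metis
  qed
  moreover have "finite R"
    using symbol_rows_subset finite_subset by blast
  ultimately have "\<phi> permutes R"
    using \<phi>_outside by (intro bij_imp_permutes) (auto simp: bij_betw_def endo_inj_surj)
  moreover have "\<phi> r \<noteq> r" if "r \<in> R" for r
    using \<phi>[OF that] trade_disjoint_mate by (auto simp: disjoint_mate_def)
  ultimately show ?thesis
    using \<phi> by blast
qed

lemma traded_square_symbol_columns: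
  assumes "s < p" and "\<phi> permutes R"
    and \<phi>: "\<forall>r\<in>R. \<exists>c. (r, c, s) \<in> T' \<and> (\<phi> r, c, s) \<in> T"
  shows "\<exists>\<gamma>. \<forall>i<p. \<gamma> i < p \<and> (i, \<gamma> i, s) \<in> (Bk p 1 - T) \<union> T' \<and> [\<phi> i + \<gamma> i = s] (mod p)"
proof -
  have "\<exists>c<p. (i, c, s) \<in> (Bk p 1 - T) \<union> T' \<and> [\<phi> i + c = s] (mod p)" if "i < p" for i
  proof (cases "i \<in> R")
    case True
    then obtain c where "(i, c, s) \<in> T'" and "(\<phi> i, c, s) \<in> T"
      using \<phi> by blast
    moreover have "c < p"
      using \<open>(i, c, s) \<in> T'\<close> trade_disjoint_mate by (auto simp: disjoint_mate_def partial_latin_def)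
    moreover have "[\<phi> i + c = s] (mod p)"
      using \<open>(\<phi> i, c, s) \<in> T\<close> trade_subset_Bk \<open>s < p\<close> by (auto simp: eq_mod_iff_cong)
    ultimately show ?thesis
      by blast
  next
    case False
    obtain c where "c < p" and "[i + c = s] (mod p)"
      using ex_cong_add_nat[of p i s] \<open>i < p\<close> by auto
    moreover have "(i, c, s) \<notin> T"
      using False by (auto simp: R_def)
    ultimately show ?thesis
      using False \<open>i < p\<close> \<open>s < p\<close> assms(2) by (auto simp: eq_mod_iff_cong permutes_not_in)
  qed
  then show ?thesis
    by metis
qed

lemma orthogonal_symbol_row_permutation:
  assumes "s < p" and "\<phi> permutes R"
    and "\<forall>r\<in>R. \<exists>c. (r, c, s) \<in> T' \<and> (\<phi> r, c, s) \<in> T"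
  shows "orthogonal p (row_block p \<phi> {..<p}) (Bk p k)"
proof -
  obtain \<gamma> where \<gamma>: "\<And>i. i < p \<Longrightarrow> \<gamma> i < p \<and> (i, \<gamma> i, s) \<in> (Bk p 1 - T) \<union> T' \<and> [\<phi> i + \<gamma> i = s] (mod p)"
    using traded_square_symbol_columns[OF assms] by blast
  have "inj_on (\<lambda>i. (k * i + \<gamma> i) mod p) {..<p}"
  proof (rule inj_onI)
    fix i i' assume "i \<in> {..<p}" "i' \<in> {..<p}" and "(k * i + \<gamma> i) mod p = (k * i' + \<gamma> i') mod p"
    then show "i = i'"
      using orthogonal_cell_unique[OF trade_orthogonal \<open>s < p\<close>, of "(k * i + \<gamma> i) mod p" i "\<gamma> i" i' "\<gamma> i'"] \<gamma>
      by auto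
  qed
  then show ?thesis
    using \<gamma> \<open>s < p\<close> by (intro orthogonal_row_block[where s = s]) auto
qed

end

end

theorem theorem4p1:
  fixes p k s :: nat and T :: "triple set" and R :: "nat set"
  assumes "prime p" and "odd p"
    and "2 \<le> k" and "k \<le> p - 1"
    and "orthogonal_trade p 1 k T"
    and "\<exists>r c. (r, c, s) \<in> T"
    and "R = {r. \<exists>c. (r, c, s) \<in> T}"
  shows "\<exists>\<phi>. \<phi> permutes R \<and> (\<forall>r\<in>R. \<phi> r \<noteq> r) \<and>
     orth_trade_mate p 1 k
       {(r, c, (r + c) mod p) | r c. r \<in> R \<and> c < p}
       {(r, c, (\<phi> r + c) mod p) | r c. r \<in> R \<and> c < p} \<and>
     card {(r, c, (r + c) mod p) | r c. r \<in> R \<and> c < p} = p * card R"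
proof -
  obtain T' where mate: "orth_trade_mate p 1 k T T'"
    using assms(5) by (auto simp: orthogonal_trade_def)
  have "s < p"
    using assms(6) trade_subset_Bk[OF mate] by auto
  obtain \<phi> where \<phi>: "\<phi> permutes R" and derangement: "\<forall>r\<in>R. \<phi> r \<noteq> r"
    and partner: "\<forall>r\<in>R. \<exists>c. (r, c, s) \<in> T' \<and> (\<phi> r, c, s) \<in> T"
    using symbol_row_permutation[OF mate assms(7)] by blast
  have R: "R \<subseteq> {..<p}"
    using symbol_rows_subset[OF mate assms(7)] .
  have "orth_trade_mate p 1 k (row_block p id R) (row_block p \<phi> R)"
    unfolding orth_trade_mate_def Bk_one_swap_row_block[OF R \<phi>]
    using R row_permutation_disjoint_mate[OF R \<phi> derangement]
      orthogonal_symbol_row_permutation[OF mate assms(7) \<open>s < p\<close> \<phi> partner]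
    by auto
  moreover have "card (row_block p id R) = p * card R"
    using R finite_subset by (blast intro: card_row_block)
  moreover have "{(r, c, (r + c) mod p) | r c. r \<in> R \<and> c < p} = row_block p id R"
    and "{(r, c, (\<phi> r + c) mod p) | r c. r \<in> R \<and> c < p} = row_block p \<phi> R"
    by (auto simp: row_block_def)
  ultimately show ?thesis
    using \<phi> derangement by auto
qed

end
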